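(* Let $G$ be a multigraph of even order $n$, let $S \subseteq V(G)$ with $|S|$ odd and $|S| \ge 3$, let $F$ be a 1-factor of $G$, and let $\Delta = \Delta(G)$. Then $$\operatorname{ex}(\langle S\rangle, \Delta-1; G-F) \le \operatorname{ex}(\langle S\rangle, \Delta; G) + \min\{(n-|S|-1)/2,\ (|S|-1)/2\}.$$
   Context: Multigraphs are finite and loopless, multiple edges allowed. For a host multigraph $K$ and $S\subseteq V(K)$ of odd size at least 3, $\langle S\rangle$ denotes the subgraph of $K$ induced by $S$, and $\operatorname{ex}(\langle S\rangle, k; K) = e(\langle S\rangle) - k(|S|-1)/2$ is its $k$-excess computed in $K$ (here $e(\cdot)$ is the number of edges). *)

theory Defs
  imports Complex_Main
begin

text \<open>Parallel edges are distinct identifiers with the same endpoints.\<close>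

definition multigraph :: "'a set \<Rightarrow> 'e set \<Rightarrow> ('e \<Rightarrow> 'a set) \<Rightarrow> bool" where
  "multigraph V E ends \<longleftrightarrow> finite V \<and> finite E \<and>
     (\<forall>e\<in>E. ends e \<subseteq> V \<and> card (ends e) = 2)"

definition deg :: "'e set \<Rightarrow> ('e \<Rightarrow> 'a set) \<Rightarrow> 'a \<Rightarrow> nat" where
  "deg E ends v = card {e\<in>E. v \<in> ends e}"

definition max_deg :: "'a set \<Rightarrow> 'e set \<Rightarrow> ('e \<Rightarrow> 'a set) \<Rightarrow> nat" where
  "max_deg V E ends = Max (deg E ends ` V)"

definition one_factor :: "'a set \<Rightarrow> 'e set \<Rightarrow> ('e \<Rightarrow> 'a set) \<Rightarrow> 'e set \<Rightarrow> bool" where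
  "one_factor V E ends F \<longleftrightarrow> F \<subseteq> E \<and> (\<forall>v\<in>V. deg F ends v = 1)"

definition induced_edges :: "'e set \<Rightarrow> ('e \<Rightarrow> 'a set) \<Rightarrow> 'a set \<Rightarrow> nat" where
  "induced_edges E ends S = card {e\<in>E. ends e \<subseteq> S}"

definition excess :: "'e set \<Rightarrow> ('e \<Rightarrow> 'a set) \<Rightarrow> 'a set \<Rightarrow> real \<Rightarrow> real" where
  "excess E ends S k = real (induced_edges E ends S) - k * (real (card S) - 1) / 2"

end

theory Submission
  imports Defs
begin

text \<open>Removing the 1-factor F lowers the edge count of \<open>\<langle>S\<rangle>\<close> by the number f of F-edges
  inside S, while lowering k by one raises the excess by \<open>(|S|-1)/2\<close>; so the claim is
  \<open>(|S|-1)/2 - f \<le> min ((n-|S|-1)/2) ((|S|-1)/2)\<close>. The second bound is \<open>f \<ge> 0\<close>. For the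
  first, every vertex of S is covered by exactly one F-edge: an edge inside S covers two of
  them, an edge leaving S covers one and also a vertex outside S, so \<open>|S| \<le> 2f + (n-|S|)\<close>.\<close>

lemma sum_card_incident_eq_sum_card_ends:
  assumes "finite T" "finite F"
  shows "(\<Sum>v\<in>T. card {e\<in>F. v \<in> ends e}) = (\<Sum>e\<in>F. card (ends e \<inter> T))"
proof -
  have "(\<Sum>v\<in>T. card {e\<in>F. v \<in> ends e}) = (\<Sum>v\<in>T. \<Sum>e\<in>F. if v \<in> ends e then 1 else (0::nat))"
    using assms by (simp add: sum.If_cases Int_def conj_commute)
  also have "\<dots> = (\<Sum>e\<in>F. \<Sum>v\<in>T. if v \<in> ends e then 1 else (0::nat))"
    by (rule sum.swap)
  also have "\<dots> = (\<Sum>e\<in>F. card (ends e \<inter> T))"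
    using assms by (simp add: sum.If_cases Int_commute)
  finally show ?thesis .
qed

lemma one_factor_sum_card_ends:
  assumes "one_factor V E ends F" "finite F" "finite T" "T \<subseteq> V"
  shows "(\<Sum>e\<in>F. card (ends e \<inter> T)) = card T"
proof -
  have "(\<Sum>v\<in>T. card {e\<in>F. v \<in> ends e}) = (\<Sum>v\<in>T. 1)"
    using assms(1,4) by (intro sum.cong) (auto simp: one_factor_def deg_def)
  then show ?thesis
    using sum_card_incident_eq_sum_card_ends[OF assms(3,2)] by simp
qed

lemma card_ends_inter_le_card_ends_outside:
  assumes "ends e \<subseteq> V" "card (ends e) = 2" "\<not> ends e \<subseteq> S"
  shows "card (ends e \<inter> S) \<le> card (ends e \<inter> (V - S))"
proof -
  have fin: "finite (ends e)" using assms(2) card.infinite by force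
  have "ends e = (ends e \<inter> S) \<union> (ends e \<inter> (V - S))" using assms(1) by blast
  then have "card (ends e \<inter> S) + card (ends e \<inter> (V - S)) = 2"
    using assms(2) fin card_Un_disjoint[of "ends e \<inter> S" "ends e \<inter> (V - S)"] by auto
  moreover have "ends e \<inter> (V - S) \<noteq> {}" using assms(1,3) by blast
  then have "card (ends e \<inter> (V - S)) \<ge> 1" using fin by (simp add: Suc_le_eq card_gt_0_iff)
  ultimately show ?thesis by linarith
qed

lemma card_le_one_factor_inside_plus_outside:
  assumes "multigraph V E ends" "one_factor V E ends F" "S \<subseteq> V"
  shows "card S \<le> 2 * induced_edges F ends S + card (V - S)"
proof -
  have fV: "finite V" and edge: "\<And>e. e \<in> E \<Longrightarrow> ends e \<subseteq> V \<and> card (ends e) = 2"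
    using assms(1) by (auto simp: multigraph_def)
  have FE: "F \<subseteq> E" using assms(2) by (simp add: one_factor_def)
  then have fF: "finite F" using assms(1) by (auto simp: multigraph_def intro: finite_subset)
  define Fin where "Fin = {e\<in>F. ends e \<subseteq> S}"
  have "card S = (\<Sum>e\<in>F. card (ends e \<inter> S))"
    using one_factor_sum_card_ends[OF assms(2) fF _ assms(3)] fV assms(3) finite_subset by metis
  also have "\<dots> = (\<Sum>e\<in>Fin. card (ends e \<inter> S)) + (\<Sum>e\<in>F - Fin. card (ends e \<inter> S))"
    using sum.subset_diff[of Fin F] fF by (simp add: Fin_def add.commute)
  also have "(\<Sum>e\<in>Fin. card (ends e \<inter> S)) = 2 * card Fin"
    using FE edge by (simp add: Fin_def Int_absorb2 subset_iff)
  also have "(\<Sum>e\<in>F - Fin. card (ends e \<inter> S)) \<le> (\<Sum>e\<in>F - Fin. card (ends e \<inter> (V - S)))"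
    using FE edge by (intro sum_mono card_ends_inter_le_card_ends_outside) (auto simp: Fin_def)
  also have "\<dots> \<le> (\<Sum>e\<in>F. card (ends e \<inter> (V - S)))"
    using fF by (intro sum_mono2) auto
  also have "\<dots> = card (V - S)"
    using one_factor_sum_card_ends[OF assms(2) fF] fV by simp
  finally show ?thesis by (simp add: induced_edges_def Fin_def)
qed

lemma induced_edges_Diff:
  assumes "finite E" "F \<subseteq> E"
  shows "induced_edges E ends S = induced_edges (E - F) ends S + induced_edges F ends S"
proof -
  have "{e\<in>E. ends e \<subseteq> S} = {e\<in>E - F. ends e \<subseteq> S} \<union> {e\<in>F. ends e \<subseteq> S}"
    using assms(2) by auto
  then show ?thesis
    unfolding induced_edges_def
    using assms by (simp add: card_Un_disjoint finite_subset Int_def disjoint_iff)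
qed

lemma excess_Diff_pred:
  assumes "finite E" "F \<subseteq> E"
  shows "excess (E - F) ends S (k - 1)
    = excess E ends S k - real (induced_edges F ends S) + (real (card S) - 1) / 2"
  using induced_edges_Diff[OF assms, of ends S] by (simp add: excess_def field_simps)

theorem mainTheorem4:
  fixes V :: "'a set" and E F :: "'e set" and ends :: "'e \<Rightarrow> 'a set" and S :: "'a set"
  assumes "multigraph V E ends"
    and "even (card V)"
    and "S \<subseteq> V" and "odd (card S)" and "card S \<ge> 3"
    and "one_factor V E ends F"
  shows "excess (E - F) ends S (real (max_deg V E ends) - 1)
     \<le> excess E ends S (real (max_deg V E ends))
        + min ((real (card V) - real (card S) - 1) / 2) ((real (card S) - 1) / 2)"
proof -
  have "finite E" "finite V" using assms(1) by (auto simp: multigraph_def)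
  have "F \<subseteq> E" using assms(6) by (simp add: one_factor_def)
  with \<open>finite E\<close> have "excess (E - F) ends S (real (max_deg V E ends) - 1)
      = excess E ends S (real (max_deg V E ends)) - real (induced_edges F ends S)
        + (real (card S) - 1) / 2"
    by (rule excess_Diff_pred)
  moreover have "card S \<le> 2 * induced_edges F ends S + card (V - S)"
    using card_le_one_factor_inside_plus_outside[OF assms(1,6,3)] .
  moreover have "real (card (V - S)) = real (card V) - real (card S)"
    using assms(3) \<open>finite V\<close> by (simp add: card_Diff_subset finite_subset card_mono)
  ultimately show ?thesis by (simp add: min_def field_simps)
qed

end
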